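(* For $n\ge 0$ let $s_n=\sum_{r=0}^{n}1/r!$. For every positive integer $k$ there exists a constant $n(k)$ such that for all $n\ge n(k)$, among the $k$ consecutive partial sums $s_n, s_{n+1},\dots,s_{n+k-1}$ at most two are convergents of the simple continued fraction expansion of $e$.
   Context: The convergents of $e$ are the rationals obtained by truncating the simple continued fraction expansion of $e$; a partial sum $s_n$ "is a convergent" if it equals one of these rationals. *)

theory Defs
  imports Complex_Main
begin

fun cf_rem :: "real \<Rightarrow> nat \<Rightarrow> real" where
  "cf_rem x 0 = x"
| "cf_rem x (Suc n) = 1 / frac (cf_rem x n)"

definition cf_digit :: "real \<Rightarrow> nat \<Rightarrow> int" where
  "cf_digit x n = \<lfloor>cf_rem x n\<rfloor>"

fun cf_eval :: "int list \<Rightarrow> real" where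
  "cf_eval [] = 0"
| "cf_eval [a] = of_int a"
| "cf_eval (a # b # l) = of_int a + 1 / cf_eval (b # l)"

definition cf_convergent :: "real \<Rightarrow> nat \<Rightarrow> real" where
  "cf_convergent x n = cf_eval (map (cf_digit x) [0..<Suc n])"

definition is_convergent_of :: "real \<Rightarrow> real \<Rightarrow> bool" where
  "is_convergent_of x q \<longleftrightarrow> (\<exists>m. q = cf_convergent x m)"

definition s_e :: "nat \<Rightarrow> real" where
  "s_e n = (\<Sum>r = 0..n. 1 / fact r)"

end

theory Submission
  imports Defs
begin

text \<open>If \<open>s\<^sub>n = p/q\<close> is a convergent of the irrational number \<open>e\<close>, then
  \<open>1/(n+1)! < e - s\<^sub>n \<le> 1/q\<^sup>2\<close>, so the reduced denominator \<open>n!/g\<^sub>n\<close> of \<open>s\<^sub>n\<close> is at most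
  \<open>\<surd>(n+1)!\<close>, i.e. \<open>n! \<le> (n+1) g\<^sub>n\<^sup>2\<close>.  For indices \<open>a < b\<close> in a window of length \<open>k\<close> the
  factors \<open>g\<^sub>a, g\<^sub>b\<close> are almost coprime: their gcd divides \<open>b! s\<^sub>b - (b!/a!) a! s\<^sub>a\<close>, which is
  polynomially bounded in \<open>n\<close>.  Three such factors all divide \<open>c!\<close> for the largest index \<open>c\<close>,
  so their product is at most \<open>c!\<close> times a polynomial; comparing with
  \<open>a! b! c! \<le> (n+k)\<^sup>3 (g\<^sub>a g\<^sub>b g\<^sub>c)\<^sup>2\<close> bounds \<open>n!\<close> by a polynomial in \<open>n\<close>, which fails for large \<open>n\<close>.\<close>

fun cf_eval_tail :: "int list \<Rightarrow> real \<Rightarrow> real" where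
  "cf_eval_tail [] t = t"
| "cf_eval_tail (a # l) t = of_int a + 1 / cf_eval_tail l t"

text \<open>The product of the matrices \<open>[[a, 1], [1, 0]]\<close> over the list, applied to \<open>v\<close>.
  Thus \<open>cf_apply l (1, 0)\<close> is numerator and denominator of the convergent \<open>[l]\<close>, and
  \<open>cf_apply l (0, 1)\<close> those of the previous convergent.\<close>

fun cf_apply :: "int list \<Rightarrow> int \<times> int \<Rightarrow> int \<times> int" where
  "cf_apply [] v = v"
| "cf_apply (a # l) v = (case cf_apply l v of (p, q) \<Rightarrow> (a * p + q, p))"

lemma cf_eval_tail_append: "cf_eval_tail (l @ [a]) t = cf_eval_tail l (of_int a + 1 / t)"
  by (induction l) auto

lemma cf_eval_tail_pos:
  assumes "\<forall>b\<in>set l. 1 \<le> b" and "0 < t"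
  shows "0 < cf_eval_tail l t"
  using assms
proof (induction l)
  case (Cons a l)
  then have "(0::real) \<le> 1 / cf_eval_tail l t" "(1::real) \<le> of_int a" by auto
  then show ?case unfolding cf_eval_tail.simps by linarith
qed simp

lemma cf_apply_det:
  assumes "cf_apply l (1, 0) = (p, q)" and "cf_apply l (0, 1) = (p', q')"
  shows "p * q' - p' * q = (-1) ^ length l"
  using assms
proof (induction l arbitrary: p q p' q')
  case (Cons a l)
  obtain P Q P' Q' where "cf_apply l (1, 0) = (P, Q)" "cf_apply l (0, 1) = (P', Q')"
    by fastforce
  moreover from this have "P * Q' - P' * Q = (-1) ^ length l" by (rule Cons.IH)
  ultimately show ?case using Cons.prems by (auto simp: algebra_simps)
qed simp

lemma cf_apply_mono:
  assumes "\<forall>b\<in>set l. 1 \<le> b" and "0 \<le> fst v" "0 \<le> snd v" and "cf_apply l v = (p, q)"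
  shows "fst v \<le> p \<and> 0 \<le> q"
  using assms
proof (induction l arbitrary: p q)
  case (Cons a l)
  obtain P Q where PQ: "cf_apply l v = (P, Q)" by fastforce
  with Cons have "fst v \<le> P" "0 \<le> Q" "1 \<le> a" by auto
  moreover have "P \<le> a * P" using \<open>1 \<le> a\<close> \<open>fst v \<le> P\<close> \<open>0 \<le> fst v\<close>
    by (simp add: mult_le_cancel_right1)
  ultimately show ?case using Cons.prems(2,4) PQ by auto
qed simp

lemma cf_eval_eq_cf_apply:
  assumes "\<forall>b\<in>set l. 1 \<le> b" and "cf_apply (a # l) (1, 0) = (p, q)"
  shows "cf_eval (a # l) = of_int p / of_int q"
  using assms
proof (induction l arbitrary: a p q)
  case (Cons b l)
  obtain P Q where PQ: "cf_apply (b # l) (1, 0) = (P, Q)" by fastforce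
  with Cons.prems have "1 \<le> P" using cf_apply_mono[of "b # l" "(1, 0)"] by auto
  moreover have "cf_eval (b # l) = of_int P / of_int Q" using Cons PQ by auto
  ultimately show ?case using Cons.prems(2) PQ by (auto simp: field_simps)
qed simp

lemma cf_eval_tail_eq_cf_apply:
  assumes "\<forall>b\<in>set l. 1 \<le> b" and "0 < t"
    and "cf_apply (a # l) (1, 0) = (p, q)" and "cf_apply (a # l) (0, 1) = (p', q')"
  shows "cf_eval_tail (a # l) t = (of_int p * t + of_int p') / (of_int q * t + of_int q')"
  using assms
proof (induction l arbitrary: a p q p' q')
  case Nil
  then show ?case by (auto simp: field_simps)
next
  case (Cons b l)
  obtain P Q P' Q' where PQ: "cf_apply (b # l) (1, 0) = (P, Q)" "cf_apply (b # l) (0, 1) = (P', Q')"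
    by fastforce
  have IH: "cf_eval_tail (b # l) t = (of_int P * t + of_int P') / (of_int Q * t + of_int Q')"
    using Cons PQ by auto
  moreover have "0 < cf_eval_tail (b # l) t" using Cons.prems by (intro cf_eval_tail_pos) auto
  ultimately have "of_int P * t + of_int P' \<noteq> 0" by auto
  with IH show ?case using Cons.prems(3,4) PQ by (auto simp: field_simps)
qed

lemma cf_eval_tail_cf_rem: "cf_eval_tail (map (cf_digit x) [0..<n]) (cf_rem x n) = x"
proof (induction n)
  case (Suc n)
  have "of_int (cf_digit x n) + 1 / cf_rem x (Suc n) = cf_rem x n"
    by (simp add: cf_digit_def frac_def)
  with Suc show ?case by (simp add: cf_eval_tail_append)
qed simp

lemma cf_rem_irrational: "x \<notin> \<rat> \<Longrightarrow> cf_rem x n \<notin> \<rat>"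
proof (induction n)
  case (Suc n)
  have "cf_rem x n = frac (cf_rem x n) + of_int \<lfloor>cf_rem x n\<rfloor>" by (simp add: frac_def)
  then have "frac (cf_rem x n) \<notin> \<rat>" using Suc by (metis Rats_add Rats_of_int)
  then show ?case by (auto dest: Rats_inverse simp: divide_inverse)
qed simp

lemma cf_rem_Suc_gt_1:
  assumes "x \<notin> \<rat>"
  shows "1 < cf_rem x (Suc n)"
proof -
  have "cf_rem x n \<notin> \<int>" using cf_rem_irrational[OF assms] Ints_subset_Rats by blast
  then have "0 < frac (cf_rem x n)" "frac (cf_rem x n) < 1"
    using frac_ge_0 frac_lt_1 frac_eq_0_iff[of "cf_rem x n"] by (auto simp: less_le)
  then show ?thesis by simp
qed

lemma cf_digit_Suc_ge_1: "x \<notin> \<rat> \<Longrightarrow> 1 \<le> cf_digit x (Suc n)"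
  using cf_rem_Suc_gt_1[of x n] by (simp add: cf_digit_def)

lemma abs_moebius_minus_ratio_le:
  fixes p q p' q' :: int and t :: real
  assumes "\<bar>p * q' - p' * q\<bar> = 1" and "1 \<le> q" "0 \<le> q'" and "1 \<le> t"
  shows "\<bar>(of_int p * t + of_int p') / (of_int q * t + of_int q') - of_int p / of_int q\<bar>
    \<le> 1 / of_int q ^ 2"
proof -
  have "real_of_int q * 1 \<le> q * t" using assms(2,4) by (intro mult_left_mono) auto
  then have "real_of_int q \<le> q * t + q'" using assms(3) by simp
  moreover have q: "0 < real_of_int q" using assms(2) by simp
  ultimately have den: "real_of_int q \<le> q * t + q'" "0 < q * t + q'" by linarith+
  have det: "\<bar>real_of_int (p * q' - p' * q)\<bar> = 1" using assms(1) by (metis of_int_1 of_int_abs)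
  have "(p * t + p') / (q * t + q') - p / q = - of_int (p * q' - p' * q) / (q * (q * t + q'))"
    using den q by (simp add: field_simps)
  then have "\<bar>(p * t + p') / (q * t + q') - p / q\<bar>
      = \<bar>real_of_int (p * q' - p' * q)\<bar> / \<bar>q * (q * t + q')\<bar>"
    by (simp only: abs_divide abs_minus)
  also have "\<dots> = 1 / (q * (q * t + q'))" using den q by (simp only: det) simp
  also have "\<dots> \<le> 1 / of_int q ^ 2"
    using den q by (simp add: power2_eq_square divide_left_mono mult_left_mono)
  finally show ?thesis .
qed

theorem cf_convergent_approx:
  assumes "x \<notin> \<rat>"
  obtains p q :: int where "1 \<le> q" "cf_convergent x m = of_int p / of_int q"
    "\<bar>x - of_int p / of_int q\<bar> \<le> 1 / of_int q ^ 2"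
proof -
  define l where "l = map (\<lambda>i. cf_digit x (Suc i)) [0..<m]"
  have digits: "map (cf_digit x) [0..<Suc m] = cf_digit x 0 # l"
    unfolding l_def by (rule map_upt_Suc)
  have l_ge_1: "\<forall>b\<in>set l. 1 \<le> b"
    using cf_digit_Suc_ge_1[OF assms] by (auto simp: l_def)
  obtain p q p' q' where pq: "cf_apply (cf_digit x 0 # l) (1, 0) = (p, q)"
    and pq': "cf_apply (cf_digit x 0 # l) (0, 1) = (p', q')" by fastforce
  obtain P Q P' Q' where PQ: "cf_apply l (1, 0) = (P, Q)" "cf_apply l (0, 1) = (P', Q')"
    by fastforce
  have q: "1 \<le> q" "0 \<le> q'"
    using pq pq' PQ cf_apply_mono[OF l_ge_1, of "(1, 0)"] cf_apply_mono[OF l_ge_1, of "(0, 1)"]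
    by auto
  define t where "t = cf_rem x (Suc m)"
  have t: "1 < t" unfolding t_def by (rule cf_rem_Suc_gt_1[OF assms])
  have "x = cf_eval_tail (cf_digit x 0 # l) t"
    using cf_eval_tail_cf_rem[of x "Suc m"] by (simp only: digits t_def)
  also have "\<dots> = (p * t + p') / (q * t + q')"
    using t by (intro cf_eval_tail_eq_cf_apply[OF l_ge_1 _ pq pq']) simp
  finally have x_eq: "x = (p * t + p') / (q * t + q')" .
  have "\<bar>p * q' - p' * q\<bar> = 1" using cf_apply_det[OF pq pq'] by simp
  then have "\<bar>x - of_int p / of_int q\<bar> \<le> 1 / of_int q ^ 2"
    unfolding x_eq using q t by (intro abs_moebius_minus_ratio_le) auto
  moreover have "cf_convergent x m = of_int p / of_int q"
    unfolding cf_convergent_def digits by (rule cf_eval_eq_cf_apply[OF l_ge_1 pq])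
  ultimately show ?thesis using that q by blast
qed

lemma dvd_mult_gcd_of_mult_eq:
  fixes a b p q :: nat
  assumes "a * q = p * b"
  shows "b dvd q * gcd a b"
proof -
  have "b dvd gcd (q * a) (q * b)" using assms by (intro gcd_greatest) (auto simp: mult.commute)
  then show ?thesis by (simp add: gcd_mult_distrib_nat)
qed

lemma gcd_mult_dvd_mult_gcd: "gcd z (x * y) dvd gcd z x * gcd z (y :: nat)"
proof -
  have "gcd z (x * y) dvd gcd (gcd z x * z) (gcd z x * y)"
  proof (intro gcd_greatest)
    show "gcd z (x * y) dvd gcd z x * z" by (simp add: gcd_mult_distrib_nat)
    show "gcd z (x * y) dvd gcd z x * y" by (simp add: gcd_mult_distrib_nat mult.commute)
  qed
  then show ?thesis by (simp add: gcd_mult_distrib_nat)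
qed

lemma mult3_le_gcds_mult:
  fixes x y z c :: nat
  assumes "x dvd c" "y dvd c" "z dvd c" "0 < c"
  shows "x * y * z \<le> gcd x y * gcd x z * gcd y z * c"
proof (cases "x = 0 \<or> y = 0 \<or> z = 0")
  case False
  define L where "L = lcm x y"
  have "L dvd x * y" unfolding L_def by (intro lcm_least) auto
  then have "gcd z L dvd gcd z (x * y)" by (meson dvd_trans gcd_dvd1 gcd_dvd2 gcd_greatest)
  also have "\<dots> dvd gcd x z * gcd y z"
    using gcd_mult_dvd_mult_gcd[of z x y] by (simp only: gcd.commute[of z])
  finally have "gcd z L \<le> gcd x z * gcd y z" using False by (intro dvd_imp_le) auto
  moreover have "lcm z L \<le> c" unfolding L_def using assms by (intro dvd_imp_le lcm_least) auto
  ultimately have "gcd z L * lcm z L \<le> gcd x z * gcd y z * c" by (rule mult_le_mono)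
  have "x * y = gcd x y * L" unfolding L_def by (rule prod_gcd_lcm_nat)
  then have "x * y * z = gcd x y * L * z" by (simp only:)
  also have "\<dots> = gcd x y * (gcd z L * lcm z L)" by (simp only: prod_gcd_lcm_nat[symmetric] mult_ac)
  also have "\<dots> \<le> gcd x y * (gcd x z * gcd y z * c)"
    using \<open>gcd z L * lcm z L \<le> _\<close> by (rule mult_le_mono2)
  finally show ?thesis by (simp only: mult_ac)
qed auto

lemma fact_div_fact_le_power:
  assumes "r \<le> b" "b < W" "b - r \<le> k"
  shows "fact b div fact r \<le> W ^ k"
proof -
  have "fact b div fact (b - (b - r)) \<le> b ^ (b - r)" by (rule fact_div_fact_le_pow) simp
  also have "\<dots> \<le> W ^ (b - r)" using assms(2) by (intro power_mono) auto
  also have "\<dots> \<le> W ^ k" using assms by (intro power_increasing) auto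
  finally show ?thesis using assms(1) by simp
qed

lemma three_less_elements:
  fixes S :: "'a :: linorder set"
  assumes "finite S" "3 \<le> card S"
  obtains a b c where "a \<in> S" "b \<in> S" "c \<in> S" "a < b" "b < c"
proof -
  define xs where "xs = sorted_list_of_set S"
  have "sorted_wrt (<) xs" "set xs = S" "length xs = card S"
    using assms(1) by (simp_all add: xs_def)
  then show ?thesis
    using that[of "xs ! 0" "xs ! 1" "xs ! 2"] assms(2) by (auto simp: sorted_wrt_nth_less)
qed

lemma power_div_fact_le_exp:
  assumes "0 \<le> x"
  shows "x ^ n / fact n \<le> exp (x :: real)"
proof -
  have "(\<lambda>m. x ^ m / fact m) sums exp x"
    using exp_converges[of x] by (simp add: divide_inverse mult.commute)
  then show ?thesis
    using sum_le_suminf[of "\<lambda>m. x ^ m / fact m" "{n}"] assms by (auto simp: sums_iff)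
qed

lemma eventually_less_fact: "eventually (\<lambda>n. K * (n + k) ^ D < fact n) sequentially"
proof -
  define M where "M = real K * fact D * exp (real k) + 1"
  have "0 < M" unfolding M_def by (simp add: add_nonneg_pos)
  have "(\<lambda>n. exp 1 ^ n / fact n :: real) \<longlonglongrightarrow> 0"
    using summable_LIMSEQ_zero[OF summable_exp[of "exp 1 :: real"]] by (simp add: divide_inverse mult.commute)
  then have "eventually (\<lambda>n. exp 1 ^ n / fact n < 1 / M) sequentially"
    using \<open>0 < M\<close> by (auto intro: order_tendstoD)
  then show ?thesis
  proof eventually_elim
    case (elim n)
    have "real (n + k) ^ D \<le> fact D * exp (real (n + k))"
      using power_div_fact_le_exp[of "real (n + k)" D] by (simp add: field_simps)
    then have "real (K * (n + k) ^ D) \<le> K * (fact D * exp (real (n + k)))"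
      by (simp add: mult_left_mono)
    also have "\<dots> = (M - 1) * exp 1 ^ n"
      by (simp add: M_def exp_add exp_of_nat_mult[symmetric] mult_ac)
    also have "\<dots> < M * exp 1 ^ n" by simp
    also have "\<dots> < fact n" using elim \<open>0 < M\<close> by (simp add: field_simps)
    finally show ?case by (metis of_nat_fact of_nat_less_iff)
  qed
qed

lemma exp1_minus_s_e: "\<exists>t. 0 < t \<and> t < 1 \<and> exp 1 - s_e n = exp t / fact (Suc n)"
proof -
  obtain t :: real where "0 < t" "t < 1"
    and "exp 1 = (\<Sum>m<Suc n. exp 0 / fact m * 1 ^ m) + exp t / fact (Suc n) * 1 ^ Suc n"
    using Maclaurin[of 1 "Suc n" "\<lambda>_. exp" exp] by auto
  then show ?thesis
    by (auto simp: s_e_def atLeast0AtMost lessThan_Suc_atMost)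
qed

lemma exp1_minus_s_e_gt: "1 / fact (Suc n) < exp 1 - s_e n"
  using exp1_minus_s_e[of n] by (auto simp: divide_strict_right_mono)

lemma exp1_minus_s_e_lt: "exp 1 - s_e n < 3 / fact (Suc n)"
proof -
  obtain t :: real where "t < 1" "exp 1 - s_e n = exp t / fact (Suc n)"
    using exp1_minus_s_e by blast
  moreover have "exp t < 3" using exp_less_mono[OF \<open>t < 1\<close>] exp_le by linarith
  ultimately show ?thesis by (simp add: divide_strict_right_mono)
qed

definition s_e_num :: "nat \<Rightarrow> nat" where
  "s_e_num n = (\<Sum>r = 0..n. fact n div fact r)"

lemma of_nat_s_e_num: "real (s_e_num n) = fact n * s_e n"
  by (simp add: s_e_num_def s_e_def sum_distrib_left real_of_nat_div fact_dvd)

lemma exp1_irrational: "(exp 1 :: real) \<notin> \<rat>"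
proof
  assume "(exp 1 :: real) \<in> \<rat>"
  then obtain a b :: int where "0 < b" and e: "exp 1 = (of_int a / of_int b :: real)"
    by (rule Rats_cases') auto
  define n where "n = nat b + 2"
  have "nat b dvd fact n" using \<open>0 < b\<close> by (intro dvd_fact) (auto simp: n_def)
  then have "int (nat b) dvd int (fact n)" by (simp only: int_dvd_int_iff)
  then obtain c where "fact n = b * c" using \<open>0 < b\<close> by auto
  then have "(fact n :: real) = of_int b * of_int c" by (metis of_int_fact of_int_mult)
  then have "fact n * exp 1 = (of_int (a * c) :: real)" using e \<open>0 < b\<close> by simp
  define d where "d = a * c - int (s_e_num n)"
  have "fact n * (exp 1 - s_e n) = of_int d"
    using \<open>fact n * exp 1 = of_int (a * c)\<close>
    by (simp add: d_def right_diff_distrib flip: of_nat_s_e_num)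
  moreover have "0 < fact n * (exp 1 - s_e n)"
  proof -
    have "0 < exp 1 - s_e n" by (rule order.strict_trans[OF _ exp1_minus_s_e_gt]) simp
    then show ?thesis by simp
  qed
  moreover have "fact n * (exp 1 - s_e n) < 1"
  proof -
    have "fact n * (exp 1 - s_e n) < fact n * (3 / fact (Suc n))"
      using exp1_minus_s_e_lt[of n] by (intro mult_strict_left_mono) auto
    also have "\<dots> = 3 / (n + 1)" by simp
    also have "\<dots> \<le> 1" by (simp add: n_def)
    finally show ?thesis .
  qed
  ultimately show False by simp
qed

lemma s_e_num_split:
  assumes "a \<le> b"
  shows "s_e_num b = fact b div fact a * s_e_num a + (\<Sum>r = Suc a..b. fact b div fact r)"
proof -
  have "{0..b} = {0..a} \<union> {Suc a..b}" using assms by auto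
  then have "s_e_num b = (\<Sum>r = 0..a. fact b div fact r) + (\<Sum>r = Suc a..b. fact b div fact r)"
    unfolding s_e_num_def by (simp add: sum.union_disjoint)
  moreover have "fact b div fact a * (fact a div fact r) = (fact b div fact r :: nat)" if "r \<le> a" for r
  proof -
    have "fact b div fact a * (fact a div fact r) = fact b * fact a div (fact r * fact a :: nat)"
      using that assms by (simp add: div_mult_div_if_dvd fact_dvd mult.commute)
    then show ?thesis by simp
  qed
  ultimately show ?thesis by (simp add: s_e_num_def sum_distrib_left)
qed

text \<open>\<open>n! / s_e_gcd n\<close> is the denominator of \<open>s\<^sub>n\<close> in lowest terms.\<close>

definition s_e_gcd :: "nat \<Rightarrow> nat" where
  "s_e_gcd n = gcd (s_e_num n) (fact n)"

lemma s_e_gcd_dvd_fact: "m \<le> n \<Longrightarrow> s_e_gcd m dvd fact n"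
  unfolding s_e_gcd_def by (metis dvd_trans gcd_dvd2 fact_dvd)

text \<open>The reduced denominator of \<open>s\<^sub>n\<close> divides the denominator \<open>q\<close> of any convergent equal
  to it, while \<open>1/(n+1)! < e - s\<^sub>n \<le> 1/q\<^sup>2\<close> forces \<open>q\<^sup>2 < (n+1)!\<close>.\<close>

lemma fact_le_of_is_convergent:
  assumes "is_convergent_of (exp 1) (s_e n)"
  shows "fact n \<le> Suc n * s_e_gcd n ^ 2"
proof -
  obtain m where m: "s_e n = cf_convergent (exp 1) m" using assms is_convergent_of_def by blast
  obtain p q :: int where "1 \<le> q" and pq: "s_e n = of_int p / of_int q"
    and approx: "\<bar>exp 1 - of_int p / of_int q\<bar> \<le> (1 / of_int q ^ 2 :: real)"
    using cf_convergent_approx[OF exp1_irrational, of m] m by metis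
  have "0 < s_e n" unfolding s_e_def by (intro sum_pos) auto
  then have "0 < p" using \<open>1 \<le> q\<close> pq by (simp add: zero_less_divide_iff)
  define P Q where "P = nat p" and "Q = nat q"
  have P: "p = int P" and Q: "q = int Q" "1 \<le> Q"
    using \<open>0 < p\<close> \<open>1 \<le> q\<close> by (auto simp: P_def Q_def)
  have "real (s_e_num n * Q) = real (P * fact n)"
    using of_nat_s_e_num[of n] pq \<open>1 \<le> Q\<close> by (simp add: P Q field_simps)
  then have "fact n dvd Q * s_e_gcd n"
    unfolding s_e_gcd_def of_nat_eq_iff by (rule dvd_mult_gcd_of_mult_eq)
  then have fact_le: "fact n \<le> Q * s_e_gcd n"
    using \<open>1 \<le> Q\<close> by (intro dvd_imp_le) (auto simp: s_e_gcd_def)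
  have "1 / fact (Suc n) < 1 / (real Q) ^ 2"
    using exp1_minus_s_e_gt[of n] approx by (simp add: pq Q)
  then have "real (Q ^ 2) < real (fact (Suc n))"
    using \<open>1 \<le> Q\<close> by (simp add: divide_simps del: fact_Suc)
  then have "Q ^ 2 < fact (Suc n)" by (simp only: of_nat_less_iff)
  have "fact n * fact n \<le> Q ^ 2 * s_e_gcd n ^ 2"
    using mult_le_mono[OF fact_le fact_le] by (simp add: power2_eq_square mult_ac)
  also have "\<dots> \<le> fact (Suc n) * s_e_gcd n ^ 2"
    using \<open>Q ^ 2 < fact (Suc n)\<close> by (intro mult_le_mono1) simp
  also have "\<dots> = fact n * (Suc n * s_e_gcd n ^ 2)" by (simp only: fact_Suc mult_ac of_nat_id)
  finally show ?thesis by simp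
qed

text \<open>A common factor of \<open>s_e_gcd a\<close> and \<open>s_e_gcd b\<close> divides
  \<open>s_e_num b - (b!/a!) s_e_num a\<close>, a positive sum of \<open>b - a\<close> terms \<open>b!/r!\<close>.\<close>

lemma gcd_s_e_gcd_le:
  assumes "a < b" "b < W" "b - a \<le> k"
  shows "gcd (s_e_gcd a) (s_e_gcd b) \<le> k * W ^ k"
proof -
  define C :: nat where "C = (\<Sum>r = Suc a..b. fact b div fact r)"
  have "gcd (s_e_gcd a) (s_e_gcd b) dvd s_e_num a" "gcd (s_e_gcd a) (s_e_gcd b) dvd s_e_num b"
    unfolding s_e_gcd_def by (meson dvd_trans gcd_dvd1 gcd_dvd2)+
  then have "gcd (s_e_gcd a) (s_e_gcd b) dvd C"
    using s_e_num_split[of a b] assms(1) by (simp add: C_def dvd_add_right_iff)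
  moreover have "0 < C" unfolding C_def using assms(1) by (intro sum_pos2[of _ b]) auto
  ultimately have "gcd (s_e_gcd a) (s_e_gcd b) \<le> C" by (rule dvd_imp_le)
  also have "C \<le> of_nat (card {Suc a..b}) * W ^ k"
    unfolding C_def using assms by (intro sum_bounded_above fact_div_fact_le_power) auto
  also have "\<dots> \<le> k * W ^ k" using assms(3) by simp
  finally show ?thesis .
qed

lemma fact_le_of_three_convergents:
  assumes "n \<le> a" "a < b" "b < c" "c < n + k"
    and "is_convergent_of (exp 1) (s_e a)" "is_convergent_of (exp 1) (s_e b)"
      "is_convergent_of (exp 1) (s_e c)"
  shows "fact n \<le> k ^ 6 * (n + k) ^ (7 * k + 3)"
proof -
  define W G where "W = n + k" and "G = k * W ^ k"
  define x y z where "x = s_e_gcd a" and "y = s_e_gcd b" and "z = s_e_gcd c"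
  have fact_le: "fact i \<le> W * s_e_gcd i ^ 2" if "i < W" "is_convergent_of (exp 1) (s_e i)" for i
    using fact_le_of_is_convergent[OF that(2)] that(1) by (meson Suc_leI le_trans mult_le_mono1)
  have "x * y * z \<le> gcd x y * gcd x z * gcd y z * fact c"
    unfolding x_def y_def z_def using assms(2,3) by (intro mult3_le_gcds_mult s_e_gcd_dvd_fact) auto
  also have "\<dots> \<le> G * G * G * fact c"
    unfolding x_def y_def z_def G_def using assms(1-4)
    by (intro mult_le_mono mult_le_mono1 gcd_s_e_gcd_le) (auto simp: W_def)
  finally have xyz: "x * y * z \<le> G * G * G * fact c" .
  have "fact c = fact b * (fact c div fact b :: nat)" using assms(3) by (simp add: fact_dvd)
  also have "\<dots> \<le> fact b * W ^ k"
    using assms by (intro mult_le_mono2 fact_div_fact_le_power) (auto simp: W_def)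
  finally have fact_c: "fact c \<le> fact b * W ^ k" .
  have "fact a * fact b * fact c \<le> (W * x ^ 2) * (W * y ^ 2) * (W * z ^ 2)"
    using assms unfolding x_def y_def z_def by (intro mult_le_mono fact_le) (auto simp: W_def)
  also have "\<dots> = W ^ 3 * (x * y * z) ^ 2" by (simp add: power2_eq_square power3_eq_cube mult_ac)
  also have "\<dots> \<le> W ^ 3 * (G * G * G * fact c) ^ 2" using xyz by (intro mult_le_mono2 power_mono) auto
  also have "\<dots> = W ^ 3 * G ^ 6 * fact c * fact c" by (simp add: power2_eq_square eval_nat_numeral mult_ac)
  also have "\<dots> \<le> W ^ 3 * G ^ 6 * (fact b * W ^ k) * fact c" using fact_c by simp
  finally have "fact a * (fact b * fact c) \<le> W ^ (k + 3) * G ^ 6 * (fact b * fact c)"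
    by (simp add: power_add mult_ac)
  then have "fact a \<le> W ^ (k + 3) * G ^ 6" by simp
  moreover have "W ^ (k + 3) * G ^ 6 = k ^ 6 * W ^ (7 * k + 3)"
  proof -
    have "7 * k + 3 = (k + 3) + k * 6" by simp
    then show ?thesis by (simp only: G_def power_mult_distrib power_add power_mult mult_ac)
  qed
  moreover have "fact n \<le> (fact a :: nat)" using assms(1) by (rule fact_mono)
  ultimately show ?thesis by (simp add: W_def)
qed

theorem theorem3p2:
  fixes k :: nat
  assumes "k > 0"
  shows "\<exists>N. \<forall>n \<ge> N. card {i. i < k \<and> is_convergent_of (exp 1) (s_e (n + i))} \<le> 2"
proof -
  obtain N where N: "\<And>n. n \<ge> N \<Longrightarrow> k ^ 6 * (n + k) ^ (7 * k + 3) < fact n"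
    using eventually_less_fact[of "k ^ 6" k "7 * k + 3"] unfolding eventually_sequentially by blast
  have "card {i. i < k \<and> is_convergent_of (exp 1) (s_e (n + i))} \<le> 2" if "n \<ge> N" for n
  proof (rule ccontr)
    let ?S = "{i. i < k \<and> is_convergent_of (exp 1) (s_e (n + i))}"
    assume "\<not> card ?S \<le> 2"
    then have "finite ?S" "3 \<le> card ?S" by auto
    then obtain i j l where "i \<in> ?S" "j \<in> ?S" "l \<in> ?S" "i < j" "j < l"
      by (rule three_less_elements)
    then have "fact n \<le> k ^ 6 * (n + k) ^ (7 * k + 3)"
      by (intro fact_le_of_three_convergents[of n "n + i" "n + j" "n + l"]) auto
    with N[OF that] show False by simp
  qed
  then show ?thesis by blast
qed

end
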